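(* Let $\varphi$ be the move interpretation on $2$-cells of $\mathbf{Toff}$ (the unique extension, compatible with $\star_0$ as cartesian product and $\star_1$ as composition of maps, of $\varphi(s)(v,w)=(w{\tt l},v{\tt r})$, $\varphi(N)(v)=v{\tt t}$, $\varphi(T_2)(v,w)=(v{\tt t},w{\tt t})$, $\varphi(T_3)(v,w,z)=(v{\tt t},w{\tt t},z{\tt t})$, identities mapped to identities). Then for every $3$-generator $\rho\in R_3$ with source $2$-cell $A$ and target $2$-cell $B$ on $n$ wires, $\varphi(A)(\vec v)>_{{\tt M}^n}\varphi(B)(\vec v)$ for all $\vec v\in{\tt M}^n$. For instance, for the second permutation rule $\varphi(A)(v,w,z)=(z{\tt l}{\tt l},w{\tt l}{\tt r},v{\tt r}{\tt r})$ and $\varphi(B)(v,w,z)=(z{\tt l}{\tt l},w{\tt r}{\tt l},v{\tt r}{\tt r})$.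
   Context: $\mathbf{Toff}$ is the free strict $3$-category generated by: one $0$-cell $\ast$; one $1$-generator, the wire $1:\ast\to\ast$; four $2$-generators $s:2\Rightarrow2$ (SWAP), $N:1\Rightarrow1$ (NOT), $T_2:2\Rightarrow2$, $T_3:3\Rightarrow3$; and the set $R_3$ of $3$-generators listed below. Write $\star_0$ for parallel composition (left to right), $\star_1$ for sequential composition (diagrammatic order, first the left operand then the right one), $1$ also for the identity $2$-cell on one wire and $\mathrm{id}_n$ for the identity $2$-cell on $n$ wires. Let $L_3=(s\star_01)\star_1(1\star_0s)$, $L_4=(s\star_01\star_01)\star_1(1\star_0s\star_01)\star_1(1\star_01\star_0s)$, $L'_3=(1\star_0s)\star_1(s\star_01)$, $L'_4=(1\star_01\star_0s)\star_1(1\star_0s\star_01)\star_1(s\star_01\star_01)$. $R_3$ consists of: $s\star_1s\Rrightarrow\mathrm{id}_2$; $(s\star_01)\star_1(1\star_0s)\star_1(s\star_01)\Rrightarrow(1\star_0s)\star_1(s\star_01)\star_1(1\star_0s)$; $N\star_1N\Rrightarrow\mathrm{id}_1$; $T_2\star_1T_2\Rrightarrow\mathrm{id}_2$; $T_3\star_1T_3\Rrightarrow\mathrm{id}_3$; $s\star_1(N\star_01)\Rrightarrow(1\star_0N)\star_1s$; $s\star_1(1\star_0N)\Rrightarrow(N\star_01)\star_1s$; $L_3\star_1(T_2\star_01)\Rrightarrow(1\star_0T_2)\star_1L_3$; $L'_3\star_1(1\star_0T_2)\Rrightarrow(T_2\star_01)\star_1L'_3$; $L_4\star_1(T_3\star_01)\Rrightarrow(1\star_0T_3)\star_1L_4$;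 $L'_4\star_1(1\star_0T_3)\Rrightarrow(T_3\star_01)\star_1L'_4$; $(s\star_01)\star_1T_3\Rrightarrow T_3\star_1(s\star_01)$. ${\tt M}$ is the free monoid of words on ${\tt l},{\tt r},{\tt t}$ (written left to right, $v{\tt t}$ appends ${\tt t}$), ordered by $<_{\tt M}$: first by length, then lexicographically with ${\tt t}<{\tt r}<{\tt l}$; on ${\tt M}^n$, $\vec x<_{{\tt M}^n}\vec y$ iff $x_i\le_{\tt M}y_i$ for all $i$ and $\vec x\ne\vec y$. *)

theory Defs
  imports Main
begin

datatype letter = Ll | Lr | Lt

type_synonym word = "letter list"   (* written left to right; v t = v @ [Lt] *)

fun rank :: "letter \<Rightarrow> nat" where
  "rank Lt = 0" | "rank Lr = 1" | "rank Ll = 2"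

definition mless :: "word \<Rightarrow> word \<Rightarrow> bool" where
  "mless x y \<longleftrightarrow> length x < length y \<or>
     (length x = length y \<and> (map rank x, map rank y) \<in> lexord {(a, b). a < b})"

definition mle :: "word \<Rightarrow> word \<Rightarrow> bool" where
  "mle x y \<longleftrightarrow> mless x y \<or> x = y"

definition mnless :: "word list \<Rightarrow> word list \<Rightarrow> bool" where
  "mnless xs ys \<longleftrightarrow> list_all2 mle xs ys \<and> xs \<noteq> ys"

datatype cell = Swap | NotG | Tof2 | Tof3 | Idc nat | Par cell cell | Seq cell cell

fun arity :: "cell \<Rightarrow> nat" where
  "arity Swap = 2" | "arity NotG = 1" | "arity Tof2 = 2" | "arity Tof3 = 3"
| "arity (Idc n) = n" | "arity (Par a b) = arity a + arity b" | "arity (Seq a b) = arity a"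

text \<open>Par = parallel composition \<star>0 (left to right); Seq a b = a \<star>1 b (first a, then b).\<close>
fun wf :: "cell \<Rightarrow> bool" where
  "wf (Par a b) = (wf a \<and> wf b)"
| "wf (Seq a b) = (wf a \<and> wf b \<and> arity a = arity b)"
| "wf _ = True"

fun phi :: "cell \<Rightarrow> word list \<Rightarrow> word list" where
  "phi Swap vs = (case vs of [v, w] \<Rightarrow> [w @ [Ll], v @ [Lr]] | _ \<Rightarrow> vs)"
| "phi NotG vs = (case vs of [v] \<Rightarrow> [v @ [Lt]] | _ \<Rightarrow> vs)"
| "phi Tof2 vs = (case vs of [v, w] \<Rightarrow> [v @ [Lt], w @ [Lt]] | _ \<Rightarrow> vs)"
| "phi Tof3 vs = (case vs of [v, w, z] \<Rightarrow> [v @ [Lt], w @ [Lt], z @ [Lt]] | _ \<Rightarrow> vs)"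
| "phi (Idc n) vs = vs"
| "phi (Par a b) vs = phi a (take (arity a) vs) @ phi b (drop (arity a) vs)"
| "phi (Seq a b) vs = phi b (phi a vs)"

abbreviation one :: cell where "one \<equiv> Idc 1"

definition L3 :: cell where "L3 = Seq (Par Swap one) (Par one Swap)"
definition L4 :: cell where
  "L4 = Seq (Seq (Par (Par Swap one) one) (Par (Par one Swap) one)) (Par (Par one one) Swap)"
definition L3' :: cell where "L3' = Seq (Par one Swap) (Par Swap one)"
definition L4' :: cell where
  "L4' = Seq (Seq (Par (Par one one) Swap) (Par (Par one Swap) one)) (Par (Par Swap one) one)"

definition R3 :: "(cell \<times> cell) set" where
  "R3 = {
    (Seq Swap Swap, Idc 2),
    (Seq (Seq (Par Swap one) (Par one Swap)) (Par Swap one),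
       Seq (Seq (Par one Swap) (Par Swap one)) (Par one Swap)),
    (Seq NotG NotG, Idc 1),
    (Seq Tof2 Tof2, Idc 2),
    (Seq Tof3 Tof3, Idc 3),
    (Seq Swap (Par NotG one), Seq (Par one NotG) Swap),
    (Seq Swap (Par one NotG), Seq (Par NotG one) Swap),
    (Seq L3 (Par Tof2 one), Seq (Par one Tof2) L3),
    (Seq L3' (Par one Tof2), Seq (Par Tof2 one) L3'),
    (Seq L4 (Par Tof3 one), Seq (Par one Tof3) L4),
    (Seq L4' (Par one Tof3), Seq (Par Tof3 one) L4'),
    (Seq (Par Swap one) Tof3, Seq Tof3 (Par Swap one)) }"

end

theory Submission
  imports Defs
begin

text \<open>Every rule is checked by evaluating both sides on a generic tuple of words. On each wire
  the two results either differ in length (the involution rules, whose target is an identity) or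
  have the same length and agree up to one position, where the target carries the smaller letter:
  moving gates past one another only reorders the appended letters towards t < r < l.\<close>

lemma mless_append: "ys \<noteq> [] \<Longrightarrow> mless u (u @ ys)"
  by (simp add: mless_def)

lemma mless_append_Cons:
  assumes "length x = length y" and "rank a < rank b"
  shows "mless (u @ a # x) (u @ b # y)"
  using assms by (simp add: mless_def lexord_same_pref_iff irrefl_def)

lemmas mnless_simps = mnless_def mle_def mless_append mless_append_Cons

lemma length_1E: assumes "length vs = 1" obtains a where "vs = [a]"
  using assms by (auto simp: length_Suc_conv)

lemma length_2E: assumes "length vs = 2" obtains a b where "vs = [a, b]"
  using assms by (auto simp: length_Suc_conv numeral_eq_Suc)

lemma length_3E: assumes "length vs = 3" obtains a b c where "vs = [a, b, c]"
  using assms by (auto simp: length_Suc_conv numeral_eq_Suc)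

lemma length_4E: assumes "length vs = 4" obtains a b c d where "vs = [a, b, c, d]"
  using assms by (auto simp: length_Suc_conv numeral_eq_Suc)

definition phi_decreasing :: "cell \<Rightarrow> cell \<Rightarrow> bool" where
  "phi_decreasing A B \<longleftrightarrow> wf A \<and> wf B \<and> arity A = arity B \<and>
     (\<forall>vs. length vs = arity A \<longrightarrow> mnless (phi B vs) (phi A vs))"

text \<open>The comparison comes first so that it can be reduced to explicit tuples before
  phi is unfolded on a list of unknown shape.\<close>
lemma phi_decreasingI:
  assumes "\<And>vs. length vs = n \<Longrightarrow> mnless (phi B vs) (phi A vs)"
    and "wf A" "wf B" "arity A = n" "arity B = n"
  shows "phi_decreasing A B"
  using assms by (simp add: phi_decreasing_def)

lemma swap_involution_decreasing: "phi_decreasing (Seq Swap Swap) (Idc 2)"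
  by (rule phi_decreasingI[where n = 2]) (elim length_2E, simp_all add: mnless_simps)

lemma yang_baxter_decreasing:
  "phi_decreasing (Seq (Seq (Par Swap one) (Par one Swap)) (Par Swap one))
     (Seq (Seq (Par one Swap) (Par Swap one)) (Par one Swap))"
  by (rule phi_decreasingI[where n = 3]) (elim length_3E, simp_all add: mnless_simps)

lemma not_involution_decreasing: "phi_decreasing (Seq NotG NotG) (Idc 1)"
  by (rule phi_decreasingI[where n = 1]) (elim length_1E, simp_all add: mnless_simps)

lemma toffoli2_involution_decreasing: "phi_decreasing (Seq Tof2 Tof2) (Idc 2)"
  by (rule phi_decreasingI[where n = 2]) (elim length_2E, simp_all add: mnless_simps)

lemma toffoli3_involution_decreasing: "phi_decreasing (Seq Tof3 Tof3) (Idc 3)"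
  by (rule phi_decreasingI[where n = 3]) (elim length_3E, simp_all add: mnless_simps)

lemma swap_not_left_decreasing:
  "phi_decreasing (Seq Swap (Par NotG one)) (Seq (Par one NotG) Swap)"
  by (rule phi_decreasingI[where n = 2]) (elim length_2E, simp_all add: mnless_simps)

lemma swap_not_right_decreasing:
  "phi_decreasing (Seq Swap (Par one NotG)) (Seq (Par NotG one) Swap)"
  by (rule phi_decreasingI[where n = 2]) (elim length_2E, simp_all add: mnless_simps)

lemma L3_toffoli2_decreasing: "phi_decreasing (Seq L3 (Par Tof2 one)) (Seq (Par one Tof2) L3)"
  unfolding L3_def
  by (rule phi_decreasingI[where n = 3]) (elim length_3E, simp_all add: mnless_simps)

lemma L3'_toffoli2_decreasing: "phi_decreasing (Seq L3' (Par one Tof2)) (Seq (Par Tof2 one) L3')"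
  unfolding L3'_def
  by (rule phi_decreasingI[where n = 3]) (elim length_3E, simp_all add: mnless_simps)

lemma L4_toffoli3_decreasing: "phi_decreasing (Seq L4 (Par Tof3 one)) (Seq (Par one Tof3) L4)"
  unfolding L4_def
  by (rule phi_decreasingI[where n = 4]) (elim length_4E, simp_all add: mnless_simps)

lemma L4'_toffoli3_decreasing: "phi_decreasing (Seq L4' (Par one Tof3)) (Seq (Par Tof3 one) L4')"
  unfolding L4'_def
  by (rule phi_decreasingI[where n = 4]) (elim length_4E, simp_all add: mnless_simps)

lemma swap_toffoli3_decreasing:
  "phi_decreasing (Seq (Par Swap one) Tof3) (Seq Tof3 (Par Swap one))"
  by (rule phi_decreasingI[where n = 3]) (elim length_3E, simp_all add: mnless_simps)

theorem mainTheorem6: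
  shows "\<forall>(A, B) \<in> R3. wf A \<and> wf B \<and> arity A = arity B \<and>
           (\<forall>vs. length vs = arity A \<longrightarrow> mnless (phi B vs) (phi A vs))"
proof -
  have "phi_decreasing A B" if "(A, B) \<in> R3" for A B
    using that swap_involution_decreasing yang_baxter_decreasing not_involution_decreasing
      toffoli2_involution_decreasing toffoli3_involution_decreasing
      swap_not_left_decreasing swap_not_right_decreasing
      L3_toffoli2_decreasing L3'_toffoli2_decreasing L4_toffoli3_decreasing
      L4'_toffoli3_decreasing swap_toffoli3_decreasing
    unfolding R3_def by auto
  then show ?thesis
    unfolding phi_decreasing_def by blast
qed

end
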